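(* Let $T\in\mathbb{R}$, $\tau>0$, $\gamma>0$, and define $f_\tau:\mathbb{R}\to\mathbb{R}$ by $f_\tau(x)=0$ if $x-T<-\tau/2$, $f_\tau(x)=\frac1\tau(x-T)+\frac12$ if $-\tau/2\le x-T\le\tau/2$, and $f_\tau(x)=1$ if $x-T>\tau/2$. Let $g_E(x,x')=e^{\gamma|x-x'|}$. Then the $g_E$-smooth sensitivity of $f_\tau$, $B^*(x)=\sup_{z\in\mathbb{R}}\frac{\mathrm{L}_{f_\tau,\infty}(z)}{g_E(x,z)}$, satisfies $B^*(x)=\max\left(\frac{1}{|x-T|+\tau/2},\ \frac1\tau e^{-\gamma(|x-T|-\tau/2)}\right)$ if $|x-T|>\tau/2$, and $B^*(x)=\frac1\tau$ if $|x-T|\le\tau/2$.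
   Context: $\mathbb{R}$ carries the metric $|x-x'|$. For $x\in\mathbb{R}$, $\mathrm{L}_{f,\infty}(x)$ is the infimum of all $K$ such that $|f(x)-f(x')|\le K|x-x'|$ for all $x'\in\mathbb{R}$. *)

theory Defs
  imports Complex_Main
begin

definition local_lip_inf :: "(real \<Rightarrow> real) \<Rightarrow> real \<Rightarrow> real" where
  "local_lip_inf f x = Inf {K. \<forall>x'. \<bar>f x - f x'\<bar> \<le> K * \<bar>x - x'\<bar>}"

definition smooth_sensitivity ::
  "(real \<Rightarrow> real \<Rightarrow> real) \<Rightarrow> (real \<Rightarrow> real) \<Rightarrow> real \<Rightarrow> real" where
  "smooth_sensitivity g f x = (SUP z. local_lip_inf f z / g x z)"

definition f_ramp :: "real \<Rightarrow> real \<Rightarrow> real \<Rightarrow> real" where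
  "f_ramp T \<tau> x = (if x - T < - \<tau> / 2 then 0
                    else if x - T \<le> \<tau> / 2 then (x - T) / \<tau> + 1 / 2
                    else 1)"

definition g_E :: "real \<Rightarrow> real \<Rightarrow> real \<Rightarrow> real" where
  "g_E \<gamma> x x' = exp (\<gamma> * \<bar>x - x'\<bar>)"

end

theory Submission
  imports Defs "HOL-Analysis.Analysis"
begin

text \<open>The local Lipschitz constant of the ramp at z is 1/\<tau> on the plateau
  |z - T| \<le> \<tau>/2 and 1/(|z - T| + \<tau>/2) outside it, the worst comparison point being the far
  end of the ramp. In the supremum of L(z) e^(-\<gamma>|x - z|), plateau points are dominated by the
  plateau point nearest to x, points farther from T than x by x itself, and the points in between
  by one of these two, because p \<mapsto> \<gamma>p - ln p is convex and so e^(\<gamma>p)/p is maximal at an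
  endpoint of the interval.\<close>

lemma local_lip_inf_eqI:
  assumes bound: "\<And>x'. \<bar>f z - f x'\<bar> \<le> K * \<bar>z - x'\<bar>"
    and attained: "\<bar>f z - f w\<bar> = K * \<bar>z - w\<bar>" and "w \<noteq> z"
  shows "local_lip_inf f z = K"
  unfolding local_lip_inf_def
proof (rule cInf_eq_minimum)
  show "K \<in> {K. \<forall>x'. \<bar>f z - f x'\<bar> \<le> K * \<bar>z - x'\<bar>}"
    using bound by simp
next
  fix K' assume "K' \<in> {K. \<forall>x'. \<bar>f z - f x'\<bar> \<le> K * \<bar>z - x'\<bar>}"
  then have "K * \<bar>z - w\<bar> \<le> K' * \<bar>z - w\<bar>"
    unfolding attained[symmetric] by simp
  then show "K \<le> K'"
    using \<open>w \<noteq> z\<close> by simp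
qed

lemma exp_div_le_max_endpoints:
  fixes a p b g :: real
  assumes "0 < a" "a \<le> p" "p \<le> b"
  shows "exp (g * p) / p \<le> max (exp (g * a) / a) (exp (g * b) / b)"
proof -
  have "concave_on {a..b} ln"
    unfolding concave_on_def using assms(1)
    by (intro convex_on_subset[OF ln_concave[unfolded concave_on_def]]) auto
  moreover have "convex_on {a..b} (\<lambda>t. g * t)"
    by (auto simp: convex_on_def algebra_simps)
  ultimately have "convex_on {a..b} (\<lambda>t. g * t - ln t)"
    by (intro convex_on_diff)
  then have "g * p - ln p \<le> max (g * a - ln a) (g * b - ln b)"
    using assms by (intro convex_on_le_max) auto
  then have "exp (g * p - ln p) \<le> max (exp (g * a - ln a)) (exp (g * b - ln b))"
    by (simp add: max_def split: if_splits)
  then show ?thesis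
    using assms by (simp add: exp_diff)
qed

lemma f_ramp_eq_clamp:
  assumes "\<tau> > 0"
  shows "f_ramp T \<tau> x = max 0 (min 1 ((x - T) / \<tau> + 1 / 2))"
  using assms by (auto simp: f_ramp_def field_simps)

lemma f_ramp_lipschitz:
  assumes "\<tau> > 0"
  shows "\<bar>f_ramp T \<tau> a - f_ramp T \<tau> b\<bar> \<le> \<bar>a - b\<bar> / \<tau>"
proof -
  have "\<bar>max 0 (min 1 s) - max 0 (min 1 t)\<bar> \<le> \<bar>s - t\<bar>" for s t :: real
    by (auto simp: max_def min_def)
  then have "\<bar>f_ramp T \<tau> a - f_ramp T \<tau> b\<bar> \<le> \<bar>(a - T) / \<tau> - (b - T) / \<tau>\<bar>"
    unfolding f_ramp_eq_clamp[OF assms] by (metis add_diff_cancel_right)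
  also have "\<dots> = \<bar>a - b\<bar> / \<tau>"
    using assms by (simp add: diff_divide_distrib[symmetric])
  finally show ?thesis .
qed

lemma f_ramp_reflect:
  assumes "\<tau> > 0"
  shows "f_ramp T \<tau> x = 1 - f_ramp (- T) \<tau> (- x)"
  using assms by (auto simp: f_ramp_def field_simps)

lemma f_ramp_bound_right:
  assumes "\<tau> > 0" and "\<tau> / 2 < z - T"
  shows "\<bar>f_ramp T \<tau> z - f_ramp T \<tau> v\<bar> \<le> \<bar>z - v\<bar> / (z - T + \<tau> / 2)"
proof -
  define d where "d = z - T + \<tau> / 2"
  have "d > \<tau>"
    using assms by (simp add: d_def)
  have fz: "f_ramp T \<tau> z = 1"
    using assms by (simp add: f_ramp_def)
  consider "v < T - \<tau> / 2" | "T - \<tau> / 2 \<le> v" "v \<le> T + \<tau> / 2" | "T + \<tau> / 2 < v"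
    by linarith
  then have "d * \<bar>1 - f_ramp T \<tau> v\<bar> \<le> \<bar>z - v\<bar>"
  proof cases
    case 1
    then show ?thesis
      by (simp add: f_ramp_def d_def)
  next
    case 2
    \<comment> \<open>the ramp's slope 1/\<tau> exceeds the slope 1/d of the chord from (T - \<tau>/2, 0) to (z, 1)\<close>
    have "d * (T + \<tau> / 2 - v) \<le> \<tau> * (z - v)"
    proof -
      have "\<tau> * (z - v) - d * (T + \<tau> / 2 - v) = (d - \<tau>) * (v - (T - \<tau> / 2))"
        by (simp add: d_def algebra_simps)
      moreover have "(d - \<tau>) * (v - (T - \<tau> / 2)) \<ge> 0"
        using 2 \<open>d > \<tau>\<close> by simp
      ultimately show ?thesis
        by linarith
    qed
    then have "d * ((T + \<tau> / 2 - v) / \<tau>) \<le> z - v"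
      using assms(1) by (simp add: pos_divide_le_eq mult.commute)
    moreover have "\<bar>1 - f_ramp T \<tau> v\<bar> = (T + \<tau> / 2 - v) / \<tau>"
      using 2 assms(1) by (simp add: f_ramp_def field_simps)
    ultimately show ?thesis
      using 2 assms by simp
  next
    case 3
    then show ?thesis
      using assms(1) by (simp add: f_ramp_def)
  qed
  then show ?thesis
    using fz \<open>d > \<tau>\<close> assms(1) by (simp add: d_def pos_le_divide_eq mult.commute)
qed

definition ramp_slope :: "real \<Rightarrow> real \<Rightarrow> real \<Rightarrow> real" where
  "ramp_slope T \<tau> z = 1 / max \<tau> (\<bar>z - T\<bar> + \<tau> / 2)"

lemma ramp_slope_inside: "\<bar>z - T\<bar> \<le> \<tau> / 2 \<Longrightarrow> ramp_slope T \<tau> z = 1 / \<tau>"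
  by (simp add: ramp_slope_def max_def)

lemma ramp_slope_outside: "\<tau> / 2 \<le> \<bar>z - T\<bar> \<Longrightarrow> ramp_slope T \<tau> z = 1 / (\<bar>z - T\<bar> + \<tau> / 2)"
  by (simp add: ramp_slope_def max_def)

lemma f_ramp_slope_bound:
  assumes "\<tau> > 0"
  shows "\<bar>f_ramp T \<tau> z - f_ramp T \<tau> v\<bar> \<le> ramp_slope T \<tau> z * \<bar>z - v\<bar>"
proof -
  consider "\<bar>z - T\<bar> \<le> \<tau> / 2" | "\<tau> / 2 < z - T" | "\<tau> / 2 < T - z"
    by linarith
  then show ?thesis
  proof cases
    case 1
    then show ?thesis
      using f_ramp_lipschitz[OF assms] by (simp add: ramp_slope_inside)
  next
    case 2
    then have "ramp_slope T \<tau> z = 1 / (z - T + \<tau> / 2)"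
      using assms ramp_slope_outside[of \<tau> z T] by simp
    then show ?thesis
      using f_ramp_bound_right[OF assms 2] by simp
  next
    case 3
    then have "\<bar>f_ramp (- T) \<tau> (- z) - f_ramp (- T) \<tau> (- v)\<bar> \<le> \<bar>z - v\<bar> / (T - z + \<tau> / 2)"
      using f_ramp_bound_right[OF assms, where T = "- T" and z = "- z" and v = "- v"]
      by (simp add: abs_minus_commute)
    moreover have "ramp_slope T \<tau> z = 1 / (T - z + \<tau> / 2)"
      using 3 assms ramp_slope_outside[of \<tau> z T] by simp
    ultimately show ?thesis
      using f_ramp_reflect[OF assms, of T z] f_ramp_reflect[OF assms, of T v] by simp
  qed
qed

lemma local_lip_inf_f_ramp:
  assumes "\<tau> > 0"
  shows "local_lip_inf (f_ramp T \<tau>) z = ramp_slope T \<tau> z"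
proof (rule local_lip_inf_eqI)
  show "\<bar>f_ramp T \<tau> z - f_ramp T \<tau> v\<bar> \<le> ramp_slope T \<tau> z * \<bar>z - v\<bar>" for v
    using f_ramp_slope_bound[OF assms] .
  let ?w = "if z \<le> T then T + \<tau> / 2 else T - \<tau> / 2"
  show "?w \<noteq> z"
    using assms by auto
  show "\<bar>f_ramp T \<tau> z - f_ramp T \<tau> ?w\<bar> = ramp_slope T \<tau> z * \<bar>z - ?w\<bar>"
    using assms
    by (cases "\<bar>z - T\<bar> \<le> \<tau> / 2")
      (auto simp: f_ramp_def ramp_slope_inside ramp_slope_outside abs_if field_simps split: if_splits)
qed

lemma ramp_slope_weighted_le:
  assumes "\<tau> > 0" and "\<gamma> > 0"
  shows "ramp_slope T \<tau> z / exp (\<gamma> * \<bar>x - z\<bar>)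
    \<le> max (ramp_slope T \<tau> x) (exp (- \<gamma> * max 0 (\<bar>x - T\<bar> - \<tau> / 2)) / \<tau>)"
    (is "?h z \<le> max (ramp_slope T \<tau> x) ?M")
proof -
  have triangle: "\<bar>x - T\<bar> - \<bar>z - T\<bar> \<le> \<bar>x - z\<bar>"
    by linarith
  consider "\<bar>z - T\<bar> \<le> \<tau> / 2" | "\<bar>x - T\<bar> \<le> \<bar>z - T\<bar>" | "\<tau> / 2 < \<bar>z - T\<bar>" "\<bar>z - T\<bar> < \<bar>x - T\<bar>"
    by linarith
  then show ?thesis
  proof cases
    case 1
    then have "exp (- \<gamma> * \<bar>x - z\<bar>) \<le> exp (- \<gamma> * max 0 (\<bar>x - T\<bar> - \<tau> / 2))"
      using triangle assms(2) by simp
    then have "?h z \<le> ?M"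
      using 1 assms(1) by (simp add: ramp_slope_inside exp_minus divide_right_mono field_simps)
    then show ?thesis
      by simp
  next
    case 2
    have "?h z \<le> ramp_slope T \<tau> z"
      using assms by (simp add: ramp_slope_def divide_le_eq)
    also have "\<dots> \<le> ramp_slope T \<tau> x"
      using 2 assms(1) unfolding ramp_slope_def by (intro divide_left_mono) auto
    finally show ?thesis
      by simp
  next
    case 3
    define p where "p = \<bar>z - T\<bar> + \<tau> / 2"
    define P where "P = \<bar>x - T\<bar> + \<tau> / 2"
    have "\<tau> \<le> p" "p \<le> P"
      using 3 by (simp_all add: p_def P_def)
    have "?h z \<le> (1 / p) / exp (\<gamma> * (P - p))"
      using 3 triangle assms by (simp add: ramp_slope_outside p_def P_def frac_le)
    also have "\<dots> = exp (\<gamma> * p) / p * exp (- \<gamma> * P)"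
      by (simp add: exp_diff exp_minus field_simps)
    also have "\<dots> \<le> max (exp (\<gamma> * \<tau>) / \<tau>) (exp (\<gamma> * P) / P) * exp (- \<gamma> * P)"
      using \<open>\<tau> \<le> p\<close> \<open>p \<le> P\<close> assms(1)
      by (intro mult_right_mono exp_div_le_max_endpoints) auto
    also have "\<dots> = max (exp (\<gamma> * \<tau>) / \<tau> * exp (- \<gamma> * P)) (exp (\<gamma> * P) / P * exp (- \<gamma> * P))"
      by (simp add: max_mult_distrib_right)
    also have "\<dots> = max ?M (1 / P)"
      using 3 by (simp add: P_def mult_exp_exp algebra_simps)
    also have "\<dots> = max ?M (ramp_slope T \<tau> x)"
      using 3 by (simp add: ramp_slope_outside P_def)
    finally show ?thesis
      by (simp add: max.commute)
  qed
qed

lemma smooth_sensitivity_f_ramp: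
  assumes "\<tau> > 0" and "\<gamma> > 0"
  shows "smooth_sensitivity (g_E \<gamma>) (f_ramp T \<tau>) x
    = max (ramp_slope T \<tau> x) (exp (- \<gamma> * max 0 (\<bar>x - T\<bar> - \<tau> / 2)) / \<tau>)"
proof -
  define h where "h z = ramp_slope T \<tau> z / exp (\<gamma> * \<bar>x - z\<bar>)" for z
  define p where "p = max (T - \<tau> / 2) (min (T + \<tau> / 2) x)"
  have hx: "h x = ramp_slope T \<tau> x"
    by (simp add: h_def)
  have hp: "h p = exp (- \<gamma> * max 0 (\<bar>x - T\<bar> - \<tau> / 2)) / \<tau>"
  proof -
    have "\<bar>p - T\<bar> \<le> \<tau> / 2" "\<bar>x - p\<bar> = max 0 (\<bar>x - T\<bar> - \<tau> / 2)"
      using assms(1) by (auto simp: p_def abs_if max_def min_def)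
    then show ?thesis
      by (simp add: h_def ramp_slope_inside exp_minus field_simps)
  qed
  have "smooth_sensitivity (g_E \<gamma>) (f_ramp T \<tau>) x = Sup (range h)"
    by (simp add: smooth_sensitivity_def g_E_def local_lip_inf_f_ramp[OF assms(1)] h_def)
  also have "\<dots> = max (h x) (h p)"
  proof (rule cSup_eq_maximum)
    show "max (h x) (h p) \<in> range h"
      by (simp add: max_def)
    show "y \<le> max (h x) (h p)" if "y \<in> range h" for y
      using that ramp_slope_weighted_le[OF assms] unfolding hx hp by (auto simp: h_def)
  qed
  finally show ?thesis
    by (simp only: hx hp)
qed

theorem mainTheorem8:
  fixes T \<tau> \<gamma> x :: real
  assumes "\<tau> > 0" and "\<gamma> > 0"
  shows "(\<bar>x - T\<bar> > \<tau> / 2 \<longrightarrow>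
            smooth_sensitivity (g_E \<gamma>) (f_ramp T \<tau>) x =
              max (1 / (\<bar>x - T\<bar> + \<tau> / 2)) ((1 / \<tau>) * exp (- \<gamma> * (\<bar>x - T\<bar> - \<tau> / 2))))
       \<and> (\<bar>x - T\<bar> \<le> \<tau> / 2 \<longrightarrow>
            smooth_sensitivity (g_E \<gamma>) (f_ramp T \<tau>) x = 1 / \<tau>)"
  using smooth_sensitivity_f_ramp[OF assms, of T x]
  by (auto simp: ramp_slope_inside ramp_slope_outside)

end
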